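(* For any choice of eigenbases $B_g$ ($g\in G$) used to define $\Upsilon$, the composite $\Phi^*\Upsilon:C^p\to C^p$ is the identity map for every $p\ge0$.
   Context: Let $G$ be a finite group acting linearly on a complex vector space $V$ of dimension $n$, $v\mapsto{}^gv$, and on $V^*$, $S(V)$, $\bigwedge V^*$ accordingly. $S(V)\#G$ is $S(V)\otimes\mathbb C G$ with product $(a\otimes g)(b\otimes h)=a\,{}^gb\otimes gh$. Let $C^p=S(V)\otimes\bigwedge^pV^*\otimes\mathbb C[G]$, identified with $\operatorname{Hom}_{\mathbb C}(\bigwedge^pV,S(V)\#G)$ (for $f\otimes\omega\otimes g$, $u\mapsto \omega(u)f\otimes g$). $\Phi^*:\operatorname{Hom}_{\mathbb C}(S(V)^{\otimes p},S(V)\#G)\to C^p$ is given by $(\Phi^*F)(u_1\wedge\cdots\wedge u_p)=\sum_{\pi\in\mathrm{Sym}_p}\operatorname{sgn}(\pi)F(u_{\pi(1)}\otimes\cdots\otimes u_{\pi(p)})$ for $u_i\in V$. The map $\Upsilon:C^p\to\operatorname{Hom}_{\mathbb C}(S(V)^{\otimes p},S(V)\#G)$ is defined as follows. For each $g\in G$ fix a basis $B_g=\{v_1,\dots,v_n\}$ of $V$ of eigenvectors of $g$, ${}^gv_i=\epsilon_iv_i$, with dual basis $v_1^*,\dots,v_n^*$; let $s_i\in GL(V)$ be the diagonal map (in this basis) $v_i\mapsto\epsilon_iv_i$, $v_j\mapsto v_j$ ($j\ne i$), so $g=s_1\cdots s_n$. Let $\partial_i:S(V)\to S(V)$ be the ordinary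 partial derivative $\partial/\partial v_i$ if $\epsilon_i=1$ and $\partial_i(f)=(f-{}^{s_i}f)/(v_i-{}^{s_i}v_i)$ if $\epsilon_i\ne1$. For $\alpha=f_g\otimes v_{j_1}^*\wedge\cdots\wedge v_{j_p}^*\otimes g$ with $j_1<\cdots<j_p$, set $\Upsilon(\alpha)(f_1\otimes\cdots\otimes f_p)=\Big(\prod_{k=1}^p{}^{s_1s_2\cdots s_{j_k-1}}(\partial_{j_k}f_k)\Big)f_g\otimes g$, and extend linearly. *)

theory Defs
  imports "HOL-Analysis.Analysis" "HOL-Combinatorics.Permutations"
begin

(* V = complex^'n (column vectors), G acts by matrices g *v v.
   V^* is modelled by complex^'n as well (row vectors xi, pairing xi(v) = sum_i xi$i * v$i).
   S(V) is modelled as the algebra of polynomial functions on V^* (faithful since C is infinite):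
   an element v of V is the linear function lin v. *)

definition lin :: "complex^'n \<Rightarrow> (complex^'n \<Rightarrow> complex)" where
  "lin v = (\<lambda>\<xi>. \<Sum>i\<in>UNIV. \<xi>$i * v$i)"

inductive_set SV :: "(complex^'n \<Rightarrow> complex) set" where
  SV_const: "(\<lambda>_. c) \<in> SV"
| SV_lin: "lin v \<in> SV"
| SV_add: "f \<in> SV \<Longrightarrow> g \<in> SV \<Longrightarrow> (\<lambda>\<xi>. f \<xi> + g \<xi>) \<in> SV"
| SV_mult: "f \<in> SV \<Longrightarrow> g \<in> SV \<Longrightarrow> (\<lambda>\<xi>. f \<xi> * g \<xi>) \<in> SV"

text \<open>Action of a linear map (matrix) on S(V): the algebra automorphism with act g (lin v) = lin (g *v v).\<close>
definition act :: "complex^'n^'n \<Rightarrow> (complex^'n \<Rightarrow> complex) \<Rightarrow> (complex^'n \<Rightarrow> complex)" where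
  "act g f = (\<lambda>\<xi>. f (\<xi> v* g))"

text \<open>Eigenbasis data: b g i (i < n, 0-based) is the basis B_g, eps g i the eigenvalues.
  dualc b g i is the dual basis functional v_i^* of B_g.\<close>
definition dualc :: "(complex^'n^'n \<Rightarrow> nat \<Rightarrow> complex^'n) \<Rightarrow> complex^'n^'n \<Rightarrow> nat \<Rightarrow> complex^'n \<Rightarrow> complex" where
  "dualc b g i u = vec.representation (b g ` {..<CARD('n)}) u (b g i)"

definition dualvec :: "(complex^'n^'n \<Rightarrow> nat \<Rightarrow> complex^'n) \<Rightarrow> complex^'n^'n \<Rightarrow> nat \<Rightarrow> complex^'n" where
  "dualvec b g i = (\<chi> k. dualc b g i (axis k 1))"

definition smap :: "(complex^'n^'n \<Rightarrow> nat \<Rightarrow> complex^'n) \<Rightarrow> (complex^'n^'n \<Rightarrow> nat \<Rightarrow> complex)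
    \<Rightarrow> complex^'n^'n \<Rightarrow> nat \<Rightarrow> complex^'n^'n" where
  "smap b eps g i = matrix (\<lambda>u. u + ((eps g i - 1) * dualc b g i u) *s b g i)"

text \<open>prefix b eps g j = s_0 s_1 ... s_(j-1) (0-based; = s_1 ... s_(j-1) in the paper's 1-based indexing of s_j).\<close>
definition prefix :: "(complex^'n^'n \<Rightarrow> nat \<Rightarrow> complex^'n) \<Rightarrow> (complex^'n^'n \<Rightarrow> nat \<Rightarrow> complex)
    \<Rightarrow> complex^'n^'n \<Rightarrow> nat \<Rightarrow> complex^'n^'n" where
  "prefix b eps g j = foldr (\<lambda>k M. smap b eps g k ** M) [0..<j] (mat 1)"

text \<open>The operator partial_i: ordinary partial derivative w.r.t. v_i if eps_i = 1, otherwise the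
  divided difference (f - s_i f)/(v_i - s_i v_i), taken as the (unique) polynomial quotient.\<close>
definition dpart :: "(complex^'n^'n \<Rightarrow> nat \<Rightarrow> complex^'n) \<Rightarrow> (complex^'n^'n \<Rightarrow> nat \<Rightarrow> complex)
    \<Rightarrow> complex^'n^'n \<Rightarrow> nat \<Rightarrow> (complex^'n \<Rightarrow> complex) \<Rightarrow> (complex^'n \<Rightarrow> complex)" where
  "dpart b eps g i f =
     (if eps g i = 1 then (\<lambda>\<xi>. deriv (\<lambda>t. f (\<xi> + t *s dualvec b g i)) 0)
      else (THE q. q \<in> SV \<and>
              (\<forall>\<xi>. q \<xi> * (lin (b g i) \<xi> - act (smap b eps g i) (lin (b g i)) \<xi>)
                     = f \<xi> - act (smap b eps g i) f \<xi>)))"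

text \<open>An element alpha of C^p is given by its coefficients: alpha = sum_(g in G) sum_J c g J \<otimes> v_J^* \<otimes> g,
  where J ranges over p-element subsets of {0..<n} (v_J^* taken w.r.t. B_g).
  An element of S(V)#G is a function G \<rightarrow> S(V) (zero outside G).\<close>
definition Upsilon :: "(complex^'n^'n \<Rightarrow> nat \<Rightarrow> complex^'n) \<Rightarrow> (complex^'n^'n \<Rightarrow> nat \<Rightarrow> complex)
    \<Rightarrow> (complex^'n^'n) set \<Rightarrow> (complex^'n^'n \<Rightarrow> nat set \<Rightarrow> (complex^'n \<Rightarrow> complex)) \<Rightarrow> nat
    \<Rightarrow> (nat \<Rightarrow> (complex^'n \<Rightarrow> complex)) \<Rightarrow> complex^'n^'n \<Rightarrow> (complex^'n \<Rightarrow> complex)" where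
  "Upsilon b eps G c p fs = (\<lambda>h. if h \<in> G then
      (\<lambda>\<xi>. \<Sum>J\<in>{J. J \<subseteq> {..<CARD('n)} \<and> card J = p}.
         (\<Prod>k<p. act (prefix b eps h (sorted_list_of_set J ! k))
                    (dpart b eps h (sorted_list_of_set J ! k) (fs k)) \<xi>) * c h J \<xi>)
    else (\<lambda>_. 0))"

definition PhiStar :: "nat \<Rightarrow> ((nat \<Rightarrow> (complex^'n \<Rightarrow> complex)) \<Rightarrow> complex^'n^'n \<Rightarrow> (complex^'n \<Rightarrow> complex))
    \<Rightarrow> (nat \<Rightarrow> complex^'n) \<Rightarrow> complex^'n^'n \<Rightarrow> (complex^'n \<Rightarrow> complex)" where
  "PhiStar p F us = (\<lambda>h \<xi>. \<Sum>\<pi>\<in>{\<pi>. \<pi> permutes {..<p}}.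
        (sign \<pi> :: complex) * F (\<lambda>k. lin (us (\<pi> k))) h \<xi>)"

text \<open>alpha viewed in Hom(\<And>^p V, S(V)#G): u_0 \<and>...\<and> u_(p-1) \<mapsto> sum_g sum_J det[v_(j_k)^*(u_l)] c g J \<otimes> g.\<close>
definition alpha_eval :: "(complex^'n^'n \<Rightarrow> nat \<Rightarrow> complex^'n) \<Rightarrow> (complex^'n^'n) set
    \<Rightarrow> (complex^'n^'n \<Rightarrow> nat set \<Rightarrow> (complex^'n \<Rightarrow> complex)) \<Rightarrow> nat
    \<Rightarrow> (nat \<Rightarrow> complex^'n) \<Rightarrow> complex^'n^'n \<Rightarrow> (complex^'n \<Rightarrow> complex)" where
  "alpha_eval b G c p us = (\<lambda>h. if h \<in> G then
      (\<lambda>\<xi>. \<Sum>J\<in>{J. J \<subseteq> {..<CARD('n)} \<and> card J = p}.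
         (\<Sum>\<sigma>\<in>{\<sigma>. \<sigma> permutes {..<p}}. (sign \<sigma> :: complex) *
             (\<Prod>k<p. dualc b h (sorted_list_of_set J ! k) (us (\<sigma> k)))) * c h J \<xi>)
    else (\<lambda>_. 0))"

end

theory Submission
  imports Defs
begin

(* Phi^* only ever evaluates Upsilon(alpha) on tensors of degree-one elements
   lin u_1, ..., lin u_p of S(V).  On such an element every operator partial_i
   (the partial derivative when eps_i = 1, the divided difference otherwise)
   returns the constant v_i^*(u), and constants are fixed by the twisting maps
   s_1 ... s_(j-1).  Hence Upsilon(alpha)(lin u_1 \<otimes> ... \<otimes> lin u_p) is the
   product of coordinates v_(j_k)^*(u_k) times the coefficient of alpha, and
   alternating over the permutations of the u_k gives exactly the determinant
   with which alpha itself pairs with u_1 \<and> ... \<and> u_p.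

   The theorem then follows by
   evaluating Upsilon on linear forms and exchanging two finite sums.  Only
   the facts that each B_g is a basis and that the coefficients lie in S(V)
   are needed. *)

lemma independent_card_family_spans:
  fixes bb :: "nat \<Rightarrow> complex^'n"
  assumes "inj_on bb {..<CARD('n)}" "vec.independent (bb ` {..<CARD('n)})"
  shows "vec.span (bb ` {..<CARD('n)}) = UNIV"
proof -
  have "card (bb ` {..<CARD('n)}) = vec.dim (UNIV :: (complex^'n) set)"
    using assms(1) by (simp add: card_image card_cart_basis)
  then show ?thesis
    using vec.card_eq_dim[of "bb ` {..<CARD('n)}" UNIV] assms(2) by auto
qed

locale coordinate_basis =
  fixes b :: "complex^'n^'n \<Rightarrow> nat \<Rightarrow> complex^'n" and g :: "complex^'n^'n"
  assumes inj: "inj_on (b g) {..<CARD('n)}"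
    and independent: "vec.independent (b g ` {..<CARD('n)})"
begin

lemma span_basis: "vec.span (b g ` {..<CARD('n)}) = UNIV"
  using independent_card_family_spans[OF inj independent] .

lemma dualc_add: "dualc b g i (u + v) = dualc b g i u + dualc b g i v"
  unfolding dualc_def using vec.representation_add[OF independent] span_basis by auto

lemma dualc_scale: "dualc b g i (r *s u) = r * dualc b g i u"
  unfolding dualc_def using vec.representation_scale[OF independent] span_basis by auto

lemma dualc_sum: "dualc b g i (sum f A) = (\<Sum>a\<in>A. dualc b g i (f a))"
proof -
  have "vec.representation (b g ` {..<CARD('n)}) (sum f A)
      = (\<lambda>x. \<Sum>a\<in>A. vec.representation (b g ` {..<CARD('n)}) (f a) x)"
    by (rule vec.representation_sum[OF independent]) (simp add: span_basis)
  then show ?thesis unfolding dualc_def by simp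
qed

lemma dualc_self: "i < CARD('n) \<Longrightarrow> dualc b g i (b g i) = 1"
  unfolding dualc_def using vec.representation_basis[OF independent] by auto

lemma basis_vector_nonzero: "i < CARD('n) \<Longrightarrow> b g i \<noteq> 0"
  using vec.dependent_zero[of "b g ` {..<CARD('n)}"] independent by force

lemma lin_dualvec: "lin u (dualvec b g i) = dualc b g i u"
proof -
  have "dualc b g i u = dualc b g i (\<Sum>k\<in>UNIV. (u$k) *s axis k 1)"
    by (simp add: basis_expansion)
  also have "\<dots> = (\<Sum>k\<in>UNIV. u$k * dualc b g i (axis k 1))"
    by (simp add: dualc_sum dualc_scale)
  finally show ?thesis unfolding lin_def dualvec_def by (simp add: mult.commute)
qed

lemma smap_linear:
  "Vector_Spaces.linear (*s) (*s) (\<lambda>u. u + ((eps g i - 1) * dualc b g i u) *s b g i)"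
  unfolding Vector_Spaces.linear_iff
proof (intro conjI allI)
  show "vector_space ((*s) :: complex \<Rightarrow> complex^'n \<Rightarrow> _)" by (rule vec.vector_space_axioms)
  then show "vector_space ((*s) :: complex \<Rightarrow> complex^'n \<Rightarrow> _)" .
  fix x y :: "complex^'n" and r :: complex
  show "x + y + ((eps g i - 1) * dualc b g i (x + y)) *s b g i =
      x + ((eps g i - 1) * dualc b g i x) *s b g i + (y + ((eps g i - 1) * dualc b g i y) *s b g i)"
    unfolding dualc_add by (simp add: vector_sadd_rdistrib distrib_left)
  show "r *s x + ((eps g i - 1) * dualc b g i (r *s x)) *s b g i
      = r *s (x + ((eps g i - 1) * dualc b g i x) *s b g i)"
    unfolding dualc_scale by (simp add: vector_add_ldistrib vector_smult_assoc mult_ac)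
qed

lemma smap_apply: "smap b eps g i *v u = u + ((eps g i - 1) * dualc b g i u) *s b g i"
  unfolding smap_def by (rule matrix_works[OF smap_linear])

end

lemma lin_add: "lin (u + v) \<xi> = lin u \<xi> + lin v \<xi>"
  unfolding lin_def by (simp add: distrib_left sum.distrib)

lemma lin_scale: "lin (r *s u) \<xi> = r * lin u \<xi>"
  unfolding lin_def by (simp add: sum_distrib_left mult_ac)

lemma lin_add_arg: "lin v (\<xi> + \<eta>) = lin v \<xi> + lin v \<eta>"
  unfolding lin_def by (simp add: distrib_right sum.distrib)

lemma lin_scale_arg: "lin v (t *s \<xi>) = t * lin v \<xi>"
  unfolding lin_def by (simp add: sum_distrib_left mult_ac)

lemma lin_scaleR_arg: "lin v (r *\<^sub>R \<xi>) = r *\<^sub>R lin v \<xi>"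
  unfolding lin_def by (simp add: scaleR_sum_right)

lemma lin_axis: "lin v (axis k 1) = v $ k"
proof -
  have "lin v (axis k 1) = (\<Sum>i\<in>UNIV. if i = k then v$i else 0)"
    unfolding lin_def by (intro sum.cong) (auto simp: axis_def)
  then show ?thesis by simp
qed

lemma act_lin: "act M (lin v) = lin (M *v v)"
  unfolding act_def lin_def
  by (auto simp: vector_matrix_mult_def matrix_vector_mult_def sum_distrib_left sum_distrib_right
      intro!: ext sum.swap[THEN trans] sum.cong simp: mult_ac)

lemma act_const: "act M (\<lambda>_. x) = (\<lambda>_. x)"
  unfolding act_def ..

lemma SV_continuous: "f \<in> SV \<Longrightarrow> continuous_on UNIV f"
  by (induction rule: SV.induct) (auto simp: lin_def intro!: continuous_intros)

lemma closure_nonvanishing_lin: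
  fixes v :: "complex^'n"
  assumes "v \<noteq> 0"
  shows "closure {\<xi>. lin v \<xi> \<noteq> 0} = UNIV"
proof -
  define K where "K = {\<xi>. lin v \<xi> = 0}"
  have "subspace K"
    unfolding K_def subspace_def by (simp add: lin_add_arg lin_scaleR_arg) (simp add: lin_def)
  obtain k where "v $ k \<noteq> 0" using assms by (metis vec_eq_iff zero_index)
  then have "axis k 1 \<notin> K" unfolding K_def by (simp add: lin_axis)
  moreover have "span K = K" using \<open>subspace K\<close> by (metis span_eq_iff)
  ultimately have "span K \<subset> span UNIV" by (metis UNIV_I psubsetI subset_UNIV span_UNIV)
  then have "dim K < dim (UNIV :: (complex^'n) set)"
    by (rule dim_psubset)
  then have "closure (UNIV - K) = UNIV"
    by (intro dense_complement_subspace) simp_all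
  moreover have "UNIV - K = {\<xi>. lin v \<xi> \<noteq> 0}" unfolding K_def by auto
  ultimately show ?thesis by simp
qed

(* A continuous function that is constant off a hyperplane is constant; this
   makes the polynomial quotient in a divided difference unique. *)
lemma continuous_constant_off_hyperplane:
  fixes v :: "complex^'n" and q :: "complex^'n \<Rightarrow> 'a::t1_space"
  assumes "continuous_on UNIV q" "v \<noteq> 0" "\<And>\<xi>. lin v \<xi> \<noteq> 0 \<Longrightarrow> q \<xi> = d"
  shows "q = (\<lambda>_. d)"
proof
  fix \<xi>
  show "q \<xi> = d"
    using continuous_constant_on_closure[of "{\<xi>. lin v \<xi> \<noteq> 0}" q d \<xi>] assms
      closure_nonvanishing_lin[OF assms(2)] by simp
qed

lemma deriv_lin_direction: "deriv (\<lambda>t. lin u (\<xi> + t *s w)) 0 = lin u w"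
proof (rule DERIV_imp_deriv)
  have "((\<lambda>t. lin u \<xi> + t * lin u w) has_field_derivative lin u w) (at 0)"
    by (auto intro!: derivative_eq_intros)
  then show "((\<lambda>t. lin u (\<xi> + t *s w)) has_field_derivative lin u w) (at 0)"
    by (simp add: lin_add_arg lin_scale_arg)
qed

context coordinate_basis
begin

lemma dpart_lin_derivative:
  assumes "eps g i = 1"
  shows "dpart b eps g i (lin u) = (\<lambda>_. dualc b g i u)"
  unfolding dpart_def using assms by (simp add: deriv_lin_direction lin_dualvec)

(* Twisted case eps_i \<noteq> 1: lin u - s_i(lin u) = (1 - eps_i) v_i^*(u) lin v_i, so the
   divided difference of lin u is again the constant v_i^*(u). *)
lemma dpart_lin_divided_difference:
  assumes i: "i < CARD('n)" and e: "eps g i \<noteq> 1"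
  shows "dpart b eps g i (lin u) = (\<lambda>_. dualc b g i u)"
proof -
  let ?v = "b g i" and ?s = "smap b eps g i"
  have act_s: "act ?s (lin w) \<xi> = lin w \<xi> + (eps g i - 1) * dualc b g i w * lin ?v \<xi>" for w \<xi>
    unfolding act_lin smap_apply lin_add lin_scale ..
  have equation_iff: "(q \<xi> * (lin ?v \<xi> - act ?s (lin ?v) \<xi>) = lin u \<xi> - act ?s (lin u) \<xi>)
      \<longleftrightarrow> (q \<xi> - dualc b g i u) * lin ?v \<xi> = 0" for q \<xi>
  proof -
    have "(q \<xi> * (lin ?v \<xi> - act ?s (lin ?v) \<xi>) = lin u \<xi> - act ?s (lin u) \<xi>)
       \<longleftrightarrow> (eps g i - 1) * ((q \<xi> - dualc b g i u) * lin ?v \<xi>) = 0"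
      unfolding act_s dualc_self[OF i] by (auto simp: algebra_simps)
    then show ?thesis using e by simp
  qed
  have "(THE q. q \<in> SV \<and> (\<forall>\<xi>. q \<xi> * (lin ?v \<xi> - act ?s (lin ?v) \<xi>)
                     = lin u \<xi> - act ?s (lin u) \<xi>)) = (\<lambda>_. dualc b g i u)"
    unfolding equation_iff
  proof (rule the_equality)
    show "(\<lambda>_. dualc b g i u) \<in> SV \<and> (\<forall>\<xi>. (dualc b g i u - dualc b g i u) * lin ?v \<xi> = 0)"
      by (simp add: SV_const)
  next
    fix q assume q: "q \<in> SV \<and> (\<forall>\<xi>. (q \<xi> - dualc b g i u) * lin ?v \<xi> = 0)"
    then have "q \<xi> = dualc b g i u" if "lin ?v \<xi> \<noteq> 0" for \<xi>
      using that by auto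
    then show "q = (\<lambda>_. dualc b g i u)"
      using continuous_constant_off_hyperplane[OF SV_continuous basis_vector_nonzero[OF i]] q
      by blast
  qed
  then show ?thesis unfolding dpart_def using e by simp
qed

lemma dpart_lin:
  "i < CARD('n) \<Longrightarrow> dpart b eps g i (lin u) = (\<lambda>_. dualc b g i u)"
  using dpart_lin_derivative dpart_lin_divided_difference by blast

end

lemma nth_sorted_list_of_set_mem:
  assumes "finite J" "k < card J"
  shows "sorted_list_of_set J ! k \<in> J"
  using assms nth_mem[of k "sorted_list_of_set J"] by simp

lemma (in coordinate_basis) Upsilon_lin:
  assumes "g \<in> G"
  shows "Upsilon b eps G c p (\<lambda>k. lin (w k)) g =
    (\<lambda>\<xi>. \<Sum>J\<in>{J. J \<subseteq> {..<CARD('n)} \<and> card J = p}.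
       (\<Prod>k<p. dualc b g (sorted_list_of_set J ! k) (w k)) * c g J \<xi>)"
proof -
  have "act (prefix b eps g (sorted_list_of_set J ! k))
          (dpart b eps g (sorted_list_of_set J ! k) (lin (w k))) \<xi>
        = dualc b g (sorted_list_of_set J ! k) (w k)"
    if "J \<subseteq> {..<CARD('n)}" "card J = p" "k < p" for J k \<xi>
  proof -
    have "finite J" using that(1) finite_subset by blast
    then have "sorted_list_of_set J ! k < CARD('n)"
      using nth_sorted_list_of_set_mem[of J k] that by auto
    then show ?thesis by (simp add: dpart_lin act_const)
  qed
  then show ?thesis
    unfolding Upsilon_def using assms by (auto intro!: ext sum.cong prod.cong)
qed

theorem proposition5p3:
  fixes G :: "(complex^'n^'n) set"
    and b :: "complex^'n^'n \<Rightarrow> nat \<Rightarrow> complex^'n"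
    and eps :: "complex^'n^'n \<Rightarrow> nat \<Rightarrow> complex"
    and c :: "complex^'n^'n \<Rightarrow> nat set \<Rightarrow> (complex^'n \<Rightarrow> complex)"
    and p :: nat
    and us :: "nat \<Rightarrow> complex^'n"
  assumes "finite G"
    and "mat 1 \<in> G"
    and "\<forall>g\<in>G. \<forall>h\<in>G. g ** h \<in> G"
    and "\<forall>g\<in>G. invertible g"
    and "\<forall>g\<in>G. inj_on (b g) {..<CARD('n)} \<and> vec.independent (b g ` {..<CARD('n)})"
    and "\<forall>g\<in>G. \<forall>i<CARD('n). g *v b g i = eps g i *s b g i"
    and "\<forall>g\<in>G. \<forall>J. c g J \<in> SV"
  shows "PhiStar p (Upsilon b eps G c p) us = alpha_eval b G c p us"
proof (intro ext)
  fix h \<xi>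
  let ?Js = "{J. J \<subseteq> {..<CARD('n)} \<and> card J = p}"
  let ?Ps = "{\<pi>. \<pi> permutes {..<p}}"
  let ?coord = "\<lambda>J \<pi>. \<Prod>k<p. dualc b h (sorted_list_of_set J ! k) (us (\<pi> k))"
  show "PhiStar p (Upsilon b eps G c p) us h \<xi> = alpha_eval b G c p us h \<xi>"
  proof (cases "h \<in> G")
    case False
    then show ?thesis unfolding PhiStar_def Upsilon_def alpha_eval_def by simp
  next
    case True
    interpret coordinate_basis b h using assms(5) True by unfold_locales auto
    have "PhiStar p (Upsilon b eps G c p) us h \<xi>
        = (\<Sum>\<pi>\<in>?Ps. (sign \<pi> :: complex) * (\<Sum>J\<in>?Js. ?coord J \<pi> * c h J \<xi>))"
      unfolding PhiStar_def Upsilon_lin[OF True] ..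
    also have "\<dots> = (\<Sum>J\<in>?Js. (\<Sum>\<pi>\<in>?Ps. (sign \<pi> :: complex) * ?coord J \<pi>) * c h J \<xi>)"
      by (simp add: sum_distrib_left sum_distrib_right mult.assoc sum.swap[of _ ?Ps])
    also have "\<dots> = alpha_eval b G c p us h \<xi>"
      unfolding alpha_eval_def using True by simp
    finally show ?thesis .
  qed
qed

end
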